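(* Let $\tau\in\mathbb{R}$ be such that $\mathbf B(\tau,0)=I$. Then \[ \frac{\partial\,\mathrm{tr}\,\mathbf B}{\partial\sigma}(\tau,0)=0\qquad\text{and}\qquad\frac{\partial^2\mathrm{tr}\,\mathbf B}{\partial\sigma^2}(\tau,0)\neq 0 . \]
   Context: Fix $a>0$, $b\in\mathbb{R}\setminus\{0\}$, $\nu\in[0,1)$, an integer $k\ge 2$ and $c\in C^k(\mathbb{S}^1,\mathbb{C})$ ($2\pi$-periodic). For $\epsilon\in\mathbb{R}$ let $\lambda_\epsilon=a+ib\epsilon$. For $\sigma\in\mathbb{C}$, $\epsilon\in\mathbb{R}$ consider the system $\dot V=\mathbf M(t,\sigma,\epsilon)V$ with \[ \mathbf M(t,\sigma,\epsilon)=\begin{pmatrix} i\frac{\sigma-\lambda_\epsilon\nu}{\lambda_\epsilon} & \frac{c(t)}{\lambda_\epsilon}\\ \frac{\overline{c(t)}}{\overline{\lambda_\epsilon}} & -i\frac{\sigma-\overline{\lambda_\epsilon}\nu}{\overline{\lambda_\epsilon}}\end{pmatrix}, \] let $\mathbf V(t,\sigma,\epsilon)$ be its fundamental matrix with $\mathbf V(0,\sigma,\epsilon)=I$, and let $\mathbf B(\sigma,\epsilon)=\mathbf V(2\pi,\sigma,\epsilon)$ be the monodromy matrix (entire in $\sigma$). *)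

theory Defs
  imports "HOL-Analysis.Analysis"
begin

definition Ck_fun :: "nat \<Rightarrow> (real \<Rightarrow> complex) \<Rightarrow> bool" where
  "Ck_fun k c \<longleftrightarrow> (\<exists>D :: nat \<Rightarrow> real \<Rightarrow> complex. D 0 = c \<and>
      (\<forall>j<k. \<forall>t. (D j has_vector_derivative D (Suc j) t) (at t)) \<and>
      continuous_on UNIV (D k))"

text \<open>c \<in> C^k(S^1, C), viewed as a 2 pi-periodic function on R.\<close>
definition Ck_circle :: "nat \<Rightarrow> (real \<Rightarrow> complex) \<Rightarrow> bool" where
  "Ck_circle k c \<longleftrightarrow> Ck_fun k c \<and> (\<forall>t. c (t + 2 * pi) = c t)"

definition lam :: "real \<Rightarrow> real \<Rightarrow> real \<Rightarrow> complex" where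
  "lam a b \<epsilon> = complex_of_real a + \<i> * complex_of_real (b * \<epsilon>)"

definition Mmat :: "real \<Rightarrow> real \<Rightarrow> real \<Rightarrow> (real \<Rightarrow> complex) \<Rightarrow>
    real \<Rightarrow> complex \<Rightarrow> real \<Rightarrow> complex^2^2" where
  "Mmat a b \<nu> c t \<sigma> \<epsilon> = (let l = lam a b \<epsilon> in
     (\<chi> i j. if i = 1 \<and> j = 1 then \<i> * (\<sigma> - l * complex_of_real \<nu>) / l
       else if i = 1 \<and> j = 2 then c t / l
       else if i = 2 \<and> j = 1 then cnj (c t) / cnj l
       else - \<i> * (\<sigma> - cnj l * complex_of_real \<nu>) / cnj l))"

definition Vfund :: "real \<Rightarrow> real \<Rightarrow> real \<Rightarrow> (real \<Rightarrow> complex) \<Rightarrow>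
    complex \<Rightarrow> real \<Rightarrow> real \<Rightarrow> complex^2^2" where
  "Vfund a b \<nu> c \<sigma> \<epsilon> = (THE V. V 0 = mat 1 \<and>
      (\<forall>t. (V has_vector_derivative (Mmat a b \<nu> c t \<sigma> \<epsilon> ** V t)) (at t)))"

definition Bmon :: "real \<Rightarrow> real \<Rightarrow> real \<Rightarrow> (real \<Rightarrow> complex) \<Rightarrow>
    complex \<Rightarrow> real \<Rightarrow> complex^2^2" where
  "Bmon a b \<nu> c \<sigma> \<epsilon> = Vfund a b \<nu> c \<sigma> \<epsilon> (2 * pi)"

end

theory Submission
  imports Defs
begin

text \<open>
  Proof of Proposition 2.9.  At \<open>\<epsilon> = 0\<close> the coefficient matrix \<open>M(\<sigma>)\<close> is trace free and
  depends affinely on \<open>\<sigma>\<close>: \<open>M(\<tau> + h) = M(\<tau>) + h K\<close>.  Let \<open>\<Phi>\<close> be the fundamental matrix at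
  \<open>\<sigma> = \<tau>\<close>.  Variation of constants gives \<open>V(t, \<tau> + h) = \<Phi>(t) U\<^sub>h(t)\<close> with
  \<open>U\<^sub>h' = h X U\<^sub>h\<close>, \<open>X = \<Phi>\<^sup>-\<^sup>1 K \<Phi>\<close>, and the Picard series of \<open>U\<^sub>h\<close> is \<open>\<Sum> h\<^sup>n Q\<^sub>n\<close>, where \<open>Q\<^sub>n\<close>
  are the Picard iterates of \<open>X\<close>.  Since \<open>\<Phi>(2\<pi>) = B(\<tau>, 0) = I\<close>, \<open>tr B(\<tau> + h, 0)\<close> is the entire
  power series \<open>\<Sum> tr Q\<^sub>n(2\<pi>) h\<^sup>n\<close>; its first two derivatives at \<open>h = 0\<close> are \<open>tr Q\<^sub>1(2\<pi>)\<close> and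
  \<open>2 tr Q\<^sub>2(2\<pi>)\<close>.  Now \<open>tr Q\<^sub>1 = \<integral> tr X = 0\<close> and \<open>tr Q\<^sub>2 = tr (Q\<^sub>1\<^sup>2) / 2 = - det Q\<^sub>1\<close>.  Finally, for real
  \<open>\<tau>\<close> everything lives in \<open>SU(1,1)\<close> resp. \<open>su(1,1)\<close>: \<open>X\<close> satisfies \<open>Im X\<^sub>1\<^sub>1 > |X\<^sub>1\<^sub>2|\<close> uniformly on
  \<open>[0, 2\<pi>]\<close>, so \<open>C = Q\<^sub>1(2\<pi>) = \<integral>\<^sub>0\<^sup>2\<^sup>\<pi> X\<close> has \<open>|C\<^sub>1\<^sub>1| > |C\<^sub>1\<^sub>2|\<close> and \<open>det C = |C\<^sub>1\<^sub>1|\<^sup>2 - |C\<^sub>1\<^sub>2|\<^sup>2 \<noteq> 0\<close>.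
\<close>

subsection \<open>Calculus of functions on the real line\<close>

lemma primitive_exists:
  fixes f :: "real \<Rightarrow> 'a::euclidean_space"
  assumes cf: "continuous_on UNIV f"
  shows "\<exists>F. F 0 = 0 \<and> (\<forall>t. (F has_vector_derivative f t) (at t))"
proof -
  define G where "G T s = integral {-T..s} f - integral {-T..0} f" for T s
  have int: "f integrable_on {a..b}" for a b
    by (rule integrable_continuous_real) (rule continuous_on_subset[OF cf], simp)
  have G_indep: "G T s = G T' s" if "T \<le> T'" "-T \<le> s" "-T \<le> 0" for T T' s
  proof -
    have "integral {-T'..-T} f + integral {-T..s} f = integral {-T'..s} f"
      using Henstock_Kurzweil_Integration.integral_combine[where a="-T'" and c="-T" and b=s and f=f] that int by auto
    moreover have "integral {-T'..-T} f + integral {-T..0} f = integral {-T'..0} f"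
      using Henstock_Kurzweil_Integration.integral_combine[where a="-T'" and c="-T" and b=0 and f=f] that int by auto
    ultimately show ?thesis unfolding G_def by (metis add_diff_cancel_left)
  qed
  define F where "F s = G (\<bar>s\<bar> + 1) s" for s
  have "(F has_vector_derivative f t) (at t)" for t
  proof -
    define T where "T = \<bar>t\<bar> + 2"
    have T: "-T < t" "t < T" unfolding T_def by linarith+
    have "((\<lambda>u. integral {-T..u} f) has_vector_derivative f t) (at t within {-T..T})"
    proof (rule integral_has_vector_derivative)
      show "continuous_on {-T..T} f" by (rule continuous_on_subset[OF cf]) simp
    qed (use T in simp)
    moreover have "at t within {-T..T} = at t"
      by (rule at_within_Icc_at) (use T in simp_all)
    ultimately have "(G T has_vector_derivative f t - 0) (at t)"
      unfolding G_def by (intro has_vector_derivative_diff has_vector_derivative_const) simp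
    then have "(G T has_vector_derivative f t) (at t)" by simp
    then show ?thesis
    proof (rule has_vector_derivative_transform_within_open[of _ _ _ "{t-1<..<t+1}"])
      fix y assume "y \<in> {t-1<..<t+1}"
      then have "\<bar>y\<bar> + 1 \<le> T" unfolding T_def by auto
      then show "G T y = F y" unfolding F_def by (intro G_indep[symmetric]) auto
    qed simp_all
  qed
  moreover have "F 0 = 0" by (simp add: F_def G_def)
  ultimately show ?thesis by blast
qed

lemma zero_derivative_imp_constant:
  fixes F :: "real \<Rightarrow> 'a::real_normed_vector"
  assumes "\<And>t. (F has_vector_derivative 0) (at t)"
  shows "F t = F 0"
proof -
  obtain c where "\<And>x. x \<in> UNIV \<Longrightarrow> F x = c"
    using has_vector_derivative_zero_constant[of UNIV F] assms by blast
  then show ?thesis by simp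
qed

lemma has_vector_derivative_imp_continuous_on:
  assumes "\<And>t. (F has_vector_derivative F' t) (at t)"
  shows "continuous_on UNIV F"
  by (rule continuous_at_imp_continuous_on) (use assms has_vector_derivative_continuous in blast)

lemma norm_power_growth_pos:
  fixes F :: "real \<Rightarrow> 'a::real_normed_vector"
  assumes F': "\<And>s. (F has_vector_derivative f s) (at s)" and F0: "F 0 = 0"
    and bnd: "\<And>s. 0 < s \<Longrightarrow> s < t \<Longrightarrow> norm (f s) \<le> B * s ^ n" and t: "0 < t"
  shows "norm (F t) \<le> B * t ^ Suc n / Suc n"
proof -
  define \<phi> where "\<phi> s = B * s ^ Suc n / Suc n" for s :: real
  have \<phi>': "(\<phi> has_vector_derivative B * s ^ n) (at s)" for s
  proof -
    have "(\<phi> has_real_derivative B * (Suc n * s ^ n) / Suc n) (at s)"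
      unfolding \<phi>_def using DERIV_pow[of "Suc n" s] by (intro DERIV_cdivide DERIV_cmult) simp
    then show ?thesis by (simp add: has_real_derivative_iff_has_vector_derivative del: of_nat_Suc)
  qed
  have "continuous_on {0..t} F"
    using has_vector_derivative_imp_continuous_on[OF F'] by (rule continuous_on_subset) simp
  moreover have "continuous_on {0..t} \<phi>" unfolding \<phi>_def by (intro continuous_intros) simp
  ultimately have "norm (F t - F 0) \<le> \<phi> t - \<phi> 0"
    by (intro differentiable_bound_general[OF t _ _ F' \<phi>' bnd])
  then show ?thesis using F0 by (simp add: \<phi>_def)
qed

lemma norm_power_growth:
  fixes F :: "real \<Rightarrow> 'a::real_normed_vector"
  assumes F': "\<And>s. (F has_vector_derivative f s) (at s)" and F0: "F 0 = 0"
    and bnd: "\<And>s. \<bar>s\<bar> \<le> \<bar>t\<bar> \<Longrightarrow> norm (f s) \<le> B * \<bar>s\<bar> ^ n"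
  shows "norm (F t) \<le> B * \<bar>t\<bar> ^ Suc n / Suc n"
proof (cases t "0::real" rule: linorder_cases)
  case less
  have "((F \<circ> uminus) has_vector_derivative (-1) *\<^sub>R f (- s)) (at s)" for s
    by (rule vector_diff_chain_at[OF has_vector_derivative_minus[OF has_vector_derivative_id] F'])
  then have "norm ((F \<circ> uminus) (-t)) \<le> B * (-t) ^ Suc n / Suc n"
  proof (rule norm_power_growth_pos)
    fix s :: real assume "0 < s" "s < -t"
    then show "norm ((-1) *\<^sub>R f (- s)) \<le> B * s ^ n" using bnd[of "-s"] by simp
  qed (use F0 less in auto)
  then show ?thesis using less by simp
next
  case greater
  have "norm (F t) \<le> B * t ^ Suc n / Suc n"
  proof (rule norm_power_growth_pos[OF F' F0 _ greater])
    fix s :: real assume "0 < s" "s < t"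
    then show "norm (f s) \<le> B * s ^ n" using bnd[of s] greater by simp
  qed
  then show ?thesis using greater by simp
qed (simp add: F0)

text \<open>Uniform convergence of \<open>g n\<close> to \<open>G\<close> on \<open>S\<close>, in the form needed for derivatives
  \<open>h \<mapsto> h *\<^sub>R g n x\<close> of functions of a real variable.\<close>
lemma uniform_limit_scaleR_bound:
  fixes g :: "nat \<Rightarrow> 'a \<Rightarrow> 'b::real_normed_vector"
  assumes "uniform_limit S g G sequentially" and "e > 0"
  shows "\<forall>\<^sub>F n in sequentially. \<forall>x\<in>S. \<forall>h::real. norm (h *\<^sub>R g n x - h *\<^sub>R G x) \<le> e * norm h"
  using uniform_limitD[OF assms]
proof (rule eventually_mono)
  fix n assume close: "\<forall>x\<in>S. dist (g n x) (G x) < e"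
  show "\<forall>x\<in>S. \<forall>h::real. norm (h *\<^sub>R g n x - h *\<^sub>R G x) \<le> e * norm h"
  proof (intro ballI allI)
    fix x and h :: real assume "x \<in> S"
    have "norm (h *\<^sub>R g n x - h *\<^sub>R G x) = \<bar>h\<bar> * dist (g n x) (G x)"
      by (simp add: dist_norm flip: scaleR_diff_right)
    also have "\<dots> \<le> \<bar>h\<bar> * e" using close \<open>x \<in> S\<close> by (intro mult_left_mono) auto
    finally show "norm (h *\<^sub>R g n x - h *\<^sub>R G x) \<le> e * norm h" by (simp add: mult.commute)
  qed
qed

lemma has_vector_derivative_series:
  fixes f :: "nat \<Rightarrow> real \<Rightarrow> 'a::banach"
  assumes der: "\<And>n t. (f n has_vector_derivative f' n t) (at t)"
    and maj: "\<And>T. \<exists>M. summable M \<and> (\<forall>n t. \<bar>t\<bar> \<le> T \<longrightarrow> norm (f' n t) \<le> M n \<and> norm (f n t) \<le> M n)"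
  shows "((\<lambda>t. \<Sum>n. f n t) has_vector_derivative (\<Sum>n. f' n t)) (at t)"
proof -
  define T where "T = \<bar>t\<bar> + 1"
  define S where "S = {-T<..<T}"
  obtain M where M: "summable M" "\<And>n t. \<bar>t\<bar> \<le> T \<Longrightarrow> norm (f' n t) \<le> M n \<and> norm (f n t) \<le> M n"
    using maj[of T] by blast
  have SM: "x \<in> S \<Longrightarrow> \<bar>x\<bar> \<le> T" for x unfolding S_def by auto
  have tS: "t \<in> S" and oS: "open S" unfolding S_def T_def by auto
  have unif: "uniform_limit S (\<lambda>n x. \<Sum>i<n. f' i x) (\<lambda>x. \<Sum>i. f' i x) sequentially"
    by (rule Weierstrass_m_test[OF _ M(1)]) (use M(2) SM in blast)
  have "\<exists>g. \<forall>x\<in>S. (\<lambda>n. f n x) sums (g x) \<and> (g has_derivative (\<lambda>h. h *\<^sub>R (\<Sum>i. f' i x))) (at x within S)"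
  proof (rule has_derivative_series[where f'="\<lambda>n x h. h *\<^sub>R f' n x"])
    show "convex S" unfolding S_def by simp
    show "(f n has_derivative (\<lambda>h. h *\<^sub>R f' n x)) (at x within S)" for n x
      using der[of n x] unfolding has_vector_derivative_def by (rule has_derivative_at_withinI)
    show "\<forall>\<^sub>F n in sequentially. \<forall>x\<in>S. \<forall>h. norm ((\<Sum>i<n. h *\<^sub>R f' i x) - h *\<^sub>R (\<Sum>i. f' i x)) \<le> e * norm h"
      if "e > 0" for e
      using uniform_limit_scaleR_bound[OF unif that] by (simp add: scaleR_sum_right)
    have "summable (\<lambda>n. f n t)"
      by (rule summable_comparison_test'[OF M(1), of 0]) (use M(2)[of t] T_def in auto)
    then show "(\<lambda>n. f n t) sums (\<Sum>n. f n t)" by (simp add: summable_sums)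
  qed (fact tS)
  then obtain g where g: "\<And>x. x \<in> S \<Longrightarrow> (\<lambda>n. f n x) sums (g x)"
     "\<And>x. x \<in> S \<Longrightarrow> (g has_derivative (\<lambda>h. h *\<^sub>R (\<Sum>i. f' i x))) (at x within S)" by blast
  have "(g has_vector_derivative (\<Sum>i. f' i t)) (at t)"
    using g(2)[OF tS] at_within_open[OF tS oS] unfolding has_vector_derivative_def by simp
  then show ?thesis
    by (rule has_vector_derivative_transform_within_open[OF _ oS tS]) (use g(1) sums_unique in metis)
qed

subsection \<open>Complex \<open>2\<times>2\<close> matrices\<close>

type_synonym cmat = "complex^2^2"

lemma cmat_eq_iff:
  "(A::cmat) = B \<longleftrightarrow> A$1$1 = B$1$1 \<and> A$1$2 = B$1$2 \<and> A$2$1 = B$2$1 \<and> A$2$2 = B$2$2"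
  by (auto simp: vec_eq_iff forall_2)

lemma mm_entries [simp]:
  "((A::cmat) ** B) $ 1 $ 1 = A$1$1 * B$1$1 + A$1$2 * B$2$1"
  "((A::cmat) ** B) $ 1 $ 2 = A$1$1 * B$1$2 + A$1$2 * B$2$2"
  "((A::cmat) ** B) $ 2 $ 1 = A$2$1 * B$1$1 + A$2$2 * B$2$1"
  "((A::cmat) ** B) $ 2 $ 2 = A$2$1 * B$1$2 + A$2$2 * B$2$2"
  by (simp_all add: matrix_matrix_mult_def sum_2)

lemma mat_entries [simp]:
  "(mat z :: cmat) $ 1 $ 1 = z" "(mat z :: cmat) $ 1 $ 2 = 0"
  "(mat z :: cmat) $ 2 $ 1 = 0" "(mat z :: cmat) $ 2 $ 2 = z"
  by (simp_all add: mat_def)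

lemma trace_cmat: "trace (X::cmat) = X$1$1 + X$2$2"
  by (simp add: trace_def sum_2)

lemma trace_square_cmat: "trace ((C::cmat) ** C) = (trace C)\<^sup>2 - 2 * det C"
  by (simp add: trace_cmat det_2 power2_eq_square algebra_simps)

lemma bounded_bilinear_mm: "bounded_bilinear ((**) :: cmat \<Rightarrow> cmat \<Rightarrow> cmat)"
  unfolding bilinear_conv_bounded_bilinear[symmetric] bilinear_def
  by (auto intro!: linearI simp: cmat_eq_iff algebra_simps scaleR_right_distrib)

lemma bounded_linear_trace: "bounded_linear (trace :: cmat \<Rightarrow> complex)"
  unfolding linear_conv_bounded_linear[symmetric]
  by (auto intro!: linearI simp: trace_cmat scaleR_right_distrib)

lemma bounded_linear_entry: "bounded_linear (\<lambda>X::cmat. X $ i $ j)"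
  by (rule bounded_linear_compose[OF bounded_linear_vec_nth bounded_linear_vec_nth])

definition adj2 :: "cmat \<Rightarrow> cmat" where
  "adj2 X = (\<chi> i j. if i = 1 \<and> j = 1 then X$2$2 else if i = 2 \<and> j = 2 then X$1$1 else - X$i$j)"

lemma adj2_entries [simp]:
  "adj2 X $ 1 $ 1 = X$2$2" "adj2 X $ 1 $ 2 = - X$1$2"
  "adj2 X $ 2 $ 1 = - X$2$1" "adj2 X $ 2 $ 2 = X$1$1"
  by (simp_all add: adj2_def)

lemma bounded_linear_adj2: "bounded_linear adj2"
  unfolding linear_conv_bounded_linear[symmetric] by (auto intro!: linearI simp: cmat_eq_iff)

lemma adj2_mult_left: "adj2 X ** X = mat (det X)"
  and adj2_mult_right: "X ** adj2 X = mat (det X)"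
  by (simp_all add: cmat_eq_iff det_2 algebra_simps)

lemma adj2_mm: "adj2 (A ** B) = adj2 B ** adj2 A"
  by (simp add: cmat_eq_iff algebra_simps)

lemma adj2_trace_free: "trace A = 0 \<Longrightarrow> adj2 A = - A"
  by (simp add: cmat_eq_iff trace_cmat add_eq_0_iff)

lemma adj2_one [simp]: "adj2 (mat 1) = mat 1"
  by (simp add: cmat_eq_iff)

text \<open>The antilinear involution \<open>X \<mapsto> J conj(X) J\<close> with \<open>J = [[0,1],[1,0]]\<close>.  Its fixed
  points are the matrices \<open>[[p, q], [cnj q, cnj p]]\<close>; the group \<open>SU(1,1)\<close> consists of the
  fixed points of determinant 1.\<close>
definition hconj :: "cmat \<Rightarrow> cmat" where
  "hconj X = (\<chi> i j. cnj (if i = 1 \<and> j = 1 then X$2$2 else if i = 1 \<and> j = 2 then X$2$1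
                         else if i = 2 \<and> j = 1 then X$1$2 else X$1$1))"

lemma hconj_entries [simp]:
  "hconj X $ 1 $ 1 = cnj (X$2$2)" "hconj X $ 1 $ 2 = cnj (X$2$1)"
  "hconj X $ 2 $ 1 = cnj (X$1$2)" "hconj X $ 2 $ 2 = cnj (X$1$1)"
  by (simp_all add: hconj_def)

lemma bounded_linear_hconj: "bounded_linear hconj"
  unfolding linear_conv_bounded_linear[symmetric] by (auto intro!: linearI simp: cmat_eq_iff)

lemma hconj_mm: "hconj (A ** B) = hconj A ** hconj B"
  and hconj_adj2: "hconj (adj2 X) = adj2 (hconj X)"
  and hconj_one [simp]: "hconj (mat 1) = mat 1"
  by (simp_all add: cmat_eq_iff)

lemma hconj_fixed:
  assumes "hconj X = X"
  shows "X$2$2 = cnj (X$1$1)" "X$2$1 = cnj (X$1$2)"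
proof -
  have "cnj (X$2$2) = X$1$1" "cnj (X$2$1) = X$1$2"
    using arg_cong[OF assms, of "\<lambda>Y. Y$1$1"] arg_cong[OF assms, of "\<lambda>Y. Y$1$2"] by simp_all
  then show "X$2$2 = cnj (X$1$1)" "X$2$1 = cnj (X$1$2)" by (metis complex_cnj_cnj)+
qed

lemma det_hconj_fixed:
  assumes "hconj X = X"
  shows "det X = of_real ((cmod (X$1$1))\<^sup>2 - (cmod (X$1$2))\<^sup>2)"
  unfolding det_2 hconj_fixed[OF assms] by (simp only: of_real_diff complex_norm_square)

subsection \<open>Existence: the Picard series\<close>

definition primitive :: "(real \<Rightarrow> 'a::euclidean_space) \<Rightarrow> real \<Rightarrow> 'a" where
  "primitive f = (SOME F. F 0 = 0 \<and> (\<forall>t. (F has_vector_derivative f t) (at t)))"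

lemma primitive:
  assumes "continuous_on UNIV f"
  shows "primitive f 0 = 0" "(primitive f has_vector_derivative f t) (at t)"
  using someI_ex[OF primitive_exists[OF assms]] unfolding primitive_def by blast+

text \<open>Picard iterates for \<open>Y' = A Y\<close>, \<open>Y 0 = I\<close>: the \<open>n\<close>-th term of the Dyson series
  \<open>\<integral>\<^sub>0\<^sup>t A(s\<^sub>1) \<integral>\<^sub>0\<^sup>s\<^sub>1 A(s\<^sub>2) \<dots> ds\<^sub>n \<dots> ds\<^sub>1\<close>.\<close>
primrec picard :: "(real \<Rightarrow> cmat) \<Rightarrow> nat \<Rightarrow> real \<Rightarrow> cmat" where
  "picard A 0 = (\<lambda>t. mat 1)"
| "picard A (Suc n) = primitive (\<lambda>s. A s ** picard A n s)"

text \<open>The recursion equation is only unfolded explicitly; the iterates are otherwise used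
  through their derivative and initial value.\<close>
declare picard.simps(2) [simp del]

lemma picard_props:
  assumes cA: "continuous_on UNIV A"
  shows "continuous_on UNIV (picard A n)
    \<and> (\<forall>t. (picard A (Suc n) has_vector_derivative A t ** picard A n t) (at t))
    \<and> picard A (Suc n) 0 = 0"
proof (induction n)
  case 0
  have c: "continuous_on UNIV (\<lambda>s. A s ** picard A 0 s)"
    by (rule bounded_bilinear.continuous_on[OF bounded_bilinear_mm cA]) simp
  show ?case using primitive[OF c] by (simp add: picard.simps)
next
  case (Suc n)
  then have cP: "continuous_on UNIV (picard A (Suc n))"
    by (intro has_vector_derivative_imp_continuous_on) blast
  have c: "continuous_on UNIV (\<lambda>s. A s ** picard A (Suc n) s)"
    by (rule bounded_bilinear.continuous_on[OF bounded_bilinear_mm cA cP])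
  show ?case using primitive[OF c] cP by (simp add: picard.simps)
qed

lemma picard_Suc_deriv:
  "continuous_on UNIV A \<Longrightarrow> (picard A (Suc n) has_vector_derivative A t ** picard A n t) (at t)"
  and picard_Suc_0: "continuous_on UNIV A \<Longrightarrow> picard A (Suc n) 0 = 0"
  using picard_props by blast+

lemma picard_bound:
  assumes cA: "continuous_on UNIV A"
    and K: "0 \<le> K" "\<And>(X::cmat) (Y::cmat). norm (X ** Y) \<le> norm X * norm Y * K"
    and L: "0 \<le> L" "\<And>s. \<bar>s\<bar> \<le> \<bar>t\<bar> \<Longrightarrow> norm (A s) \<le> L"
  shows "norm (picard A n t) \<le> norm (mat 1 :: cmat) * (K * L * \<bar>t\<bar>) ^ n / fact n"
  using L(2)
proof (induction n arbitrary: t)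
  case (Suc n)
  define B where "B = norm (mat 1 :: cmat) * (K * L) ^ Suc n / fact n"
  have "norm (picard A (Suc n) t) \<le> B * \<bar>t\<bar> ^ Suc n / Suc n"
  proof (rule norm_power_growth[OF picard_Suc_deriv[OF cA] picard_Suc_0[OF cA]])
    fix s :: real assume s: "\<bar>s\<bar> \<le> \<bar>t\<bar>"
    have IH: "norm (picard A n s) \<le> norm (mat 1 :: cmat) * (K * L * \<bar>s\<bar>) ^ n / fact n"
      by (rule Suc.IH, rule Suc.prems) (use s in linarith)
    have "norm (A s ** picard A n s) \<le> norm (A s) * norm (picard A n s) * K" by (rule K(2))
    also have "\<dots> \<le> L * (norm (mat 1 :: cmat) * (K * L * \<bar>s\<bar>) ^ n / fact n) * K"
      using Suc.prems[OF s] IH K(1) L(1) by (intro mult_right_mono mult_mono) auto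
    also have "\<dots> = B * \<bar>s\<bar> ^ n" unfolding B_def by (simp add: power_mult_distrib)
    finally show "norm (A s ** picard A n s) \<le> B * \<bar>s\<bar> ^ n" .
  qed
  also have "\<dots> = norm (mat 1 :: cmat) * (K * L * \<bar>t\<bar>) ^ Suc n / fact (Suc n)"
    unfolding B_def by (simp add: power_mult_distrib fact_Suc mult_ac del: of_nat_Suc)
  finally show ?case .
qed simp

lemma continuous_bounded_interval:
  fixes A :: "real \<Rightarrow> 'a::real_normed_vector"
  assumes "continuous_on UNIV A"
  obtains L where "0 \<le> L" "\<And>s. \<bar>s\<bar> \<le> T \<Longrightarrow> norm (A s) \<le> L"
proof -
  have "bounded (A ` {-T..T})"
    by (intro compact_imp_bounded compact_continuous_image continuous_on_subset[OF assms]) auto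
  then obtain L where L: "\<And>x. x \<in> A ` {-T..T} \<Longrightarrow> norm x \<le> L"
    unfolding bounded_iff by blast
  then show ?thesis
  proof (intro that[of "max L 0"])
    fix s assume "\<bar>s\<bar> \<le> T"
    then have "A s \<in> A ` {-T..T}" by (auto simp: abs_le_iff)
    then show "norm (A s) \<le> max L 0" using L by (meson max.coboundedI1)
  qed simp
qed

lemma picard_majorant:
  assumes cA: "continuous_on UNIV A"
  obtains M where "summable M"
    "\<And>n t. \<bar>t\<bar> \<le> T \<Longrightarrow> norm (A t ** picard A n t) \<le> M n \<and> norm (picard A (Suc n) t) \<le> M n"
proof -
  obtain K where K: "K > 0" "\<And>(X::cmat) (Y::cmat). norm (X ** Y) \<le> norm X * norm Y * K"
    using bounded_bilinear.pos_bounded[OF bounded_bilinear_mm] by blast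
  obtain L where L: "0 \<le> L" "\<And>s. \<bar>s\<bar> \<le> T \<Longrightarrow> norm (A s) \<le> L"
    by (rule continuous_bounded_interval[OF cA, where T=T]) blast
  define E where "E n = norm (mat 1 :: cmat) * (K * L * \<bar>T\<bar>) ^ n / fact n" for n
  have E: "norm (picard A n t) \<le> E n" if t: "\<bar>t\<bar> \<le> T" for n t
  proof -
    have "norm (picard A n t) \<le> norm (mat 1 :: cmat) * (K * L * \<bar>t\<bar>) ^ n / fact n"
    proof (rule picard_bound[OF cA _ K(2) L(1)])
      show "0 \<le> K" using K(1) by simp
      show "norm (A s) \<le> L" if "\<bar>s\<bar> \<le> \<bar>t\<bar>" for s using L(2) that t by simp
    qed
    also have "\<dots> \<le> E n" unfolding E_def
      using t K L by (intro divide_right_mono mult_left_mono power_mono) auto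
    finally show ?thesis .
  qed
  have sE: "summable E"
    using summable_mult[OF summable_exp[of "K * L * \<bar>T\<bar>"], of "norm (mat 1 :: cmat)"]
    unfolding E_def[abs_def] by (simp add: field_simps)
  define M where "M n = E (Suc n) + K * L * E n" for n
  have "summable M" unfolding M_def
    using sE by (intro summable_add summable_mult) (simp_all add: summable_Suc_iff)
  moreover have "norm (A t ** picard A n t) \<le> M n \<and> norm (picard A (Suc n) t) \<le> M n"
    if t: "\<bar>t\<bar> \<le> T" for n t
  proof -
    have E0: "0 \<le> E m" for m unfolding E_def using K L by simp
    have "norm (A t ** picard A n t) \<le> norm (A t) * norm (picard A n t) * K" by (rule K(2))
    also have "\<dots> \<le> L * E n * K" using L E[OF t] E0 K by (intro mult_mono) (auto simp: t)
    finally have "norm (A t ** picard A n t) \<le> K * L * E n" by (simp only: mult_ac)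
    moreover have "0 \<le> K * L * E n" using K(1) L(1) E0[of n] by simp
    ultimately show ?thesis using E[OF t, of "Suc n"] E0[of "Suc n"] unfolding M_def by linarith
  qed
  ultimately show ?thesis by (rule that)
qed

definition picard_sol :: "(real \<Rightarrow> cmat) \<Rightarrow> real \<Rightarrow> cmat" where
  "picard_sol A t = (\<Sum>n. picard A n t)"

lemma picard_summable:
  assumes cA: "continuous_on UNIV A"
  shows "summable (\<lambda>n. picard A n t)"
proof -
  obtain M where M: "summable M"
    "\<And>n s. \<bar>s\<bar> \<le> \<bar>t\<bar> \<Longrightarrow> norm (A s ** picard A n s) \<le> M n \<and> norm (picard A (Suc n) s) \<le> M n"
    by (rule picard_majorant[OF cA, where T="\<bar>t\<bar>"]) blast
  have "summable (\<lambda>n. picard A (Suc n) t)"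
    by (rule summable_comparison_test'[OF M(1), of 0]) (use M(2)[of t] in blast)
  then show ?thesis using summable_Suc_iff[of "\<lambda>n. picard A n t"] by simp
qed

lemma picard_sol:
  assumes cA: "continuous_on UNIV A"
  shows "picard_sol A 0 = mat 1" "(picard_sol A has_vector_derivative A t ** picard_sol A t) (at t)"
proof -
  have split: "picard_sol A t = mat 1 + (\<Sum>n. picard A (Suc n) t)" for t
  proof -
    have "(\<Sum>n. picard A (Suc n) t) = picard_sol A t - picard A 0 t"
      unfolding picard_sol_def by (rule suminf_split_head[OF picard_summable[OF cA]])
    then show ?thesis by simp
  qed
  then show "picard_sol A 0 = mat 1" by (simp add: picard_Suc_0[OF cA])
  have "((\<lambda>t. \<Sum>n. picard A (Suc n) t) has_vector_derivative (\<Sum>n. A t ** picard A n t)) (at t)"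
  proof (rule has_vector_derivative_series[where f="\<lambda>n. picard A (Suc n)"])
    show "(picard A (Suc n) has_vector_derivative A t ** picard A n t) (at t)" for n t
      by (rule picard_Suc_deriv[OF cA])
    fix T :: real
    obtain M where M: "summable M" "\<And>n t. \<bar>t\<bar> \<le> T \<Longrightarrow>
        norm (A t ** picard A n t) \<le> M n \<and> norm (picard A (Suc n) t) \<le> M n"
      by (rule picard_majorant[OF cA, where T=T]) blast
    then show "\<exists>M. summable M \<and> (\<forall>n t. \<bar>t\<bar> \<le> T \<longrightarrow>
        norm (A t ** picard A n t) \<le> M n \<and> norm (picard A (Suc n) t) \<le> M n)"
      by blast
  qed
  moreover have "(\<Sum>n. A t ** picard A n t) = A t ** picard_sol A t"
    unfolding picard_sol_def
    by (rule bounded_linear.suminf[OF bounded_bilinear.bounded_linear_right[OF bounded_bilinear_mm]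
          picard_summable[OF cA], symmetric])
  ultimately have "((\<lambda>t. \<Sum>n. picard A (Suc n) t) has_vector_derivative A t ** picard_sol A t) (at t)"
    by simp
  from has_vector_derivative_add[OF has_vector_derivative_const this]
  have "((\<lambda>t. mat 1 + (\<Sum>n. picard A (Suc n) t)) has_vector_derivative A t ** picard_sol A t) (at t)"
    by simp
  moreover have "picard_sol A = (\<lambda>t. mat 1 + (\<Sum>n. picard A (Suc n) t))"
    using split by (intro ext)
  ultimately show "(picard_sol A has_vector_derivative A t ** picard_sol A t) (at t)"
    by simp
qed

subsection \<open>Uniqueness for trace-free systems\<close>

lemma has_vector_derivative_mm:
  fixes F G :: "real \<Rightarrow> cmat"
  assumes "(F has_vector_derivative F') (at t)" "(G has_vector_derivative G') (at t)"
  shows "((\<lambda>t. F t ** G t) has_vector_derivative (F t ** G' + F' ** G t)) (at t)"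
  by (rule bounded_bilinear.has_vector_derivative[OF bounded_bilinear_mm assms])

text \<open>For a trace-free coefficient matrix the adjugate of one solution is a left inverse of
  the flow up to a constant: \<open>adj2 (Y t) ** Z t\<close> is constant for any two solutions, because
  \<open>adj2 A = - A\<close>.\<close>
lemma adj2_sol_constant:
  fixes A Y Z :: "real \<Rightarrow> cmat"
  assumes tr: "\<And>t. trace (A t) = 0"
    and Y': "\<And>t. (Y has_vector_derivative A t ** Y t) (at t)"
    and Z': "\<And>t. (Z has_vector_derivative A t ** Z t) (at t)"
  shows "adj2 (Y t) ** Z t = adj2 (Y 0) ** Z 0"
proof (rule zero_derivative_imp_constant[of "\<lambda>t. adj2 (Y t) ** Z t"])
  fix s
  have "((\<lambda>t. adj2 (Y t)) has_vector_derivative adj2 (A s ** Y s)) (at s)"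
    by (rule bounded_linear.has_vector_derivative[OF bounded_linear_adj2 Y'])
  from has_vector_derivative_mm[OF this Z']
  have "((\<lambda>t. adj2 (Y t) ** Z t) has_vector_derivative
      adj2 (Y s) ** (A s ** Z s) + adj2 (A s ** Y s) ** Z s) (at s)" .
  moreover have "adj2 (Y s) ** (A s ** Z s) + adj2 (A s ** Y s) ** Z s = 0"
    unfolding adj2_mm adj2_trace_free[OF tr] by (simp add: cmat_eq_iff algebra_simps)
  ultimately show "((\<lambda>t. adj2 (Y t) ** Z t) has_vector_derivative 0) (at s)" by simp
qed

lemma sol_det_one:
  fixes A Y :: "real \<Rightarrow> cmat"
  assumes tr: "\<And>t. trace (A t) = 0"
    and Y0: "Y 0 = mat 1" and Y': "\<And>t. (Y has_vector_derivative A t ** Y t) (at t)"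
  shows "det (Y t) = 1" "Y t ** adj2 (Y t) = mat 1"
proof -
  have "mat (det (Y t)) = (mat 1 :: cmat)"
    using adj2_sol_constant[OF tr Y' Y'] Y0 by (simp add: adj2_mult_left)
  then show det: "det (Y t) = 1" by (simp add: cmat_eq_iff)
  show "Y t ** adj2 (Y t) = mat 1" by (simp add: adj2_mult_right det)
qed

lemma sol_unique:
  fixes A Y Z :: "real \<Rightarrow> cmat"
  assumes tr: "\<And>t. trace (A t) = 0"
    and Y0: "Y 0 = mat 1" and Y': "\<And>t. (Y has_vector_derivative A t ** Y t) (at t)"
    and Z': "\<And>t. (Z has_vector_derivative A t ** Z t) (at t)"
  shows "Z t = Y t ** Z 0"
proof -
  have "Z t = (Y t ** adj2 (Y t)) ** Z t" using sol_det_one(2)[OF tr Y0 Y'] by simp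
  also have "\<dots> = Y t ** Z 0"
    using adj2_sol_constant[OF tr Y' Z'] Y0 by (simp add: matrix_mul_assoc[symmetric])
  finally show ?thesis .
qed

lemma fundamental_matrix_eq_picard_sol:
  fixes A :: "real \<Rightarrow> cmat"
  assumes tr: "\<And>t. trace (A t) = 0" and cA: "continuous_on UNIV A"
  shows "(THE V. V 0 = mat 1 \<and> (\<forall>t. (V has_vector_derivative A t ** V t) (at t))) = picard_sol A"
proof (rule the_equality)
  show "picard_sol A 0 = mat 1 \<and> (\<forall>t. (picard_sol A has_vector_derivative A t ** picard_sol A t) (at t))"
    using picard_sol[OF cA] by blast
next
  fix V assume V: "V 0 = mat 1 \<and> (\<forall>t. (V has_vector_derivative A t ** V t) (at t))"
  show "V = picard_sol A"
  proof
    fix t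
    have "V t = picard_sol A t ** V 0"
      by (rule sol_unique[OF tr picard_sol[OF cA]]) (use V in auto)
    then show "V t = picard_sol A t" using V by simp
  qed
qed

subsection \<open>The system at \<open>\<epsilon> = 0\<close>\<close>

abbreviation Msys :: "real \<Rightarrow> real \<Rightarrow> real \<Rightarrow> (real \<Rightarrow> complex) \<Rightarrow> complex \<Rightarrow> real \<Rightarrow> cmat" where
  "Msys a b \<nu> c \<sigma> t \<equiv> Mmat a b \<nu> c t \<sigma> 0"

lemma Msys_entries [simp]:
  "Msys a b \<nu> c \<sigma> t $ 1 $ 1 = \<i> * (\<sigma> - of_real a * of_real \<nu>) / of_real a"
  "Msys a b \<nu> c \<sigma> t $ 1 $ 2 = c t / of_real a"
  "Msys a b \<nu> c \<sigma> t $ 2 $ 1 = cnj (c t) / of_real a"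
  "Msys a b \<nu> c \<sigma> t $ 2 $ 2 = - \<i> * (\<sigma> - of_real a * of_real \<nu>) / of_real a"
  by (simp_all add: Mmat_def Let_def lam_def)

lemma trace_Msys: "trace (Msys a b \<nu> c \<sigma> t) = 0"
  by (cases "a = 0") (simp_all add: trace_cmat field_simps)

lemma continuous_Msys:
  assumes "continuous_on UNIV c"
  shows "continuous_on UNIV (Msys a b \<nu> c \<sigma>)"
proof -
  have "continuous_on UNIV (\<lambda>t. Msys a b \<nu> c \<sigma> t $ i $ j)" for i j
    using exhaust_2[of i] exhaust_2[of j]
    by (elim disjE) (simp_all add: divide_inverse continuous_on_mult_right continuous_on_cnj assms)
  then have "continuous_on UNIV (\<lambda>t. \<chi> i j. Msys a b \<nu> c \<sigma> t $ i $ j)"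
    by (intro continuous_on_vec_lambda)
  then show ?thesis by simp
qed

text \<open>The coefficient matrix depends affinely on \<open>\<sigma>\<close>, with direction \<open>Kdir a\<close>.\<close>
definition Kdir :: "real \<Rightarrow> cmat" where
  "Kdir a = (\<chi> i j. if i = j then (if i = 1 then \<i> / of_real a else - \<i> / of_real a) else 0)"

lemma Kdir_entries [simp]:
  "Kdir a $ 1 $ 1 = \<i> / of_real a" "Kdir a $ 1 $ 2 = 0"
  "Kdir a $ 2 $ 1 = 0" "Kdir a $ 2 $ 2 = - \<i> / of_real a"
  by (simp_all add: Kdir_def)

lemma Msys_shift: "a \<noteq> 0 \<Longrightarrow> Msys a b \<nu> c (\<sigma> + h) t = Msys a b \<nu> c \<sigma> t + mat h ** Kdir a"
  by (simp add: cmat_eq_iff field_simps)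

text \<open>For real \<open>\<sigma>\<close> the coefficient matrix is fixed by \<open>hconj\<close>, i.e. lies in the Lie algebra
  \<open>su(1,1)\<close>; so does \<open>Kdir a\<close>.\<close>
lemma hconj_Msys: "hconj (Msys a b \<nu> c (of_real \<tau>) t) = Msys a b \<nu> c (of_real \<tau>) t"
  and hconj_Kdir: "hconj (Kdir a) = Kdir a"
  by (simp_all add: cmat_eq_iff)

text \<open>The fundamental matrix of the definitions is the Picard series (\<open>M\<close> is trace free).\<close>
lemma Vfund_eq_picard_sol:
  assumes "continuous_on UNIV c"
  shows "Vfund a b \<nu> c \<sigma> 0 = picard_sol (Msys a b \<nu> c \<sigma>)"
  unfolding Vfund_def by (rule fundamental_matrix_eq_picard_sol[OF trace_Msys continuous_Msys[OF assms]])

subsection \<open>The first two Picard terms\<close>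

lemma trace_picard_1:
  assumes cA: "continuous_on UNIV A" and tr: "\<And>t. trace (A t) = 0"
  shows "trace (picard A 1 t) = 0"
proof -
  have "((\<lambda>t. trace (picard A 1 t)) has_vector_derivative 0) (at s)" for s
    using bounded_linear.has_vector_derivative[OF bounded_linear_trace picard_Suc_deriv[OF cA, of 0]]
    by (simp add: tr)
  then have "trace (picard A 1 t) = trace (picard A 1 0)" by (rule zero_derivative_imp_constant)
  then show ?thesis using picard_Suc_0[OF cA, of 0] by (simp add: trace_cmat)
qed

text \<open>\<open>tr Q\<^sub>2 = tr (Q\<^sub>1\<^sup>2) / 2\<close>, since both sides have derivative \<open>tr (A Q\<^sub>1)\<close>.\<close>
lemma trace_picard_2:
  assumes cA: "continuous_on UNIV A"
  shows "trace (picard A 2 t) = trace (picard A 1 t ** picard A 1 t) / 2"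
proof -
  define F where "F t = trace (picard A 2 t) - trace (picard A 1 t ** picard A 1 t) / 2" for t
  have Q1': "(picard A 1 has_vector_derivative A s) (at s)" for s
    using picard_Suc_deriv[OF cA, of 0] by simp
  have "(F has_vector_derivative 0) (at s)" for s
  proof -
    have d1: "((\<lambda>t. trace (picard A 2 t)) has_vector_derivative trace (A s ** picard A 1 s)) (at s)"
      using bounded_linear.has_vector_derivative[OF bounded_linear_trace picard_Suc_deriv[OF cA, of 1]]
      by (simp add: numeral_2_eq_2)
    have d2: "((\<lambda>t. trace (picard A 1 t ** picard A 1 t)) has_vector_derivative
        trace (picard A 1 s ** A s + A s ** picard A 1 s)) (at s)"
      by (rule bounded_linear.has_vector_derivative[OF bounded_linear_trace has_vector_derivative_mm[OF Q1' Q1']])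
    have "(F has_vector_derivative
        trace (A s ** picard A 1 s) - trace (picard A 1 s ** A s + A s ** picard A 1 s) / 2) (at s)"
      unfolding F_def[abs_def] by (intro has_vector_derivative_diff d1 has_vector_derivative_divide d2)
    moreover have "trace (A s ** picard A 1 s) - trace (picard A 1 s ** A s + A s ** picard A 1 s) / 2 = 0"
      unfolding trace_add trace_mul_sym[of "picard A 1 s"] by simp
    ultimately show ?thesis by (simp only:)
  qed
  then have "F t = F 0" by (rule zero_derivative_imp_constant)
  moreover have "picard A 1 0 = 0" "picard A 2 0 = 0"
    using picard_Suc_0[OF cA, of 0] picard_Suc_0[OF cA, of 1] by (simp_all add: numeral_2_eq_2)
  ultimately show ?thesis unfolding F_def by (simp add: trace_cmat)
qed

lemma hconj_picard_1:
  assumes cA: "continuous_on UNIV A" and hA: "\<And>t. hconj (A t) = A t"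
  shows "hconj (picard A 1 t) = picard A 1 t"
proof -
  define F where "F t = hconj (picard A 1 t) - picard A 1 t" for t
  have "(F has_vector_derivative hconj (A s) - A s) (at s)" for s
    using picard_Suc_deriv[OF cA, of 0 s] unfolding F_def[abs_def]
    by (intro has_vector_derivative_diff bounded_linear.has_vector_derivative[OF bounded_linear_hconj]) simp_all
  then have "(F has_vector_derivative 0) (at s)" for s by (simp add: hA)
  then have "F t = F 0" by (rule zero_derivative_imp_constant)
  then show ?thesis unfolding F_def using picard_Suc_0[OF cA, of 0] by (simp add: cmat_eq_iff)
qed

subsection \<open>Perturbing a real spectral parameter\<close>

text \<open>Writing
  \<open>\<Phi>\<close> for the fundamental matrix at \<open>\<sigma> = \<tau>\<close>, variation of constants gives the fundamental
  matrix at \<open>\<tau> + h\<close> as \<open>\<Phi> U\<^sub>h\<close>, where \<open>U\<^sub>h' = h X U\<^sub>h\<close> with \<open>X = \<Phi>\<^sup>-\<^sup>1 Kdir \<Phi>\<close>; the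
  Picard series of \<open>U\<^sub>h\<close> is a power series in \<open>h\<close>.\<close>
locale real_parameter =
  fixes a b \<nu> :: real and c :: "real \<Rightarrow> complex" and \<tau> :: real
  assumes a_pos: "0 < a" and c_cont: "continuous_on UNIV c"
begin

abbreviation M :: "complex \<Rightarrow> real \<Rightarrow> cmat" where
  "M \<sigma> \<equiv> Msys a b \<nu> c \<sigma>"

definition Phi :: "real \<Rightarrow> cmat" where
  "Phi = picard_sol (M (of_real \<tau>))"

text \<open>\<open>\<Phi>\<close> is the fundamental matrix at \<open>\<sigma> = \<tau>\<close>; since the system is trace free it has
  determinant one, with inverse \<open>adj2 \<Phi>\<close>.\<close>
lemma Phi_0: "Phi 0 = mat 1"
  and Phi_deriv: "(Phi has_vector_derivative M (of_real \<tau>) t ** Phi t) (at t)"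
  unfolding Phi_def using picard_sol[OF continuous_Msys[OF c_cont]] by blast+

lemma Phi_det: "det (Phi t) = 1"
  and Phi_inv: "Phi t ** adj2 (Phi t) = mat 1"
  using sol_det_one[OF trace_Msys Phi_0 Phi_deriv] by blast+

lemma Phi_cont: "continuous_on UNIV Phi"
  by (rule has_vector_derivative_imp_continuous_on[OF Phi_deriv])

text \<open>\<open>\<Phi>\<close> takes values in \<open>SU(1,1)\<close>: \<open>hconj \<Phi>\<close> solves the same equation.\<close>
lemma Phi_hconj: "hconj (Phi t) = Phi t"
proof -
  have "((\<lambda>t. hconj (Phi t)) has_vector_derivative M (of_real \<tau>) t ** hconj (Phi t)) (at t)" for t
    using bounded_linear.has_vector_derivative[OF bounded_linear_hconj Phi_deriv[of t]]
    by (simp add: hconj_mm hconj_Msys)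
  then have "hconj (Phi t) = Phi t ** hconj (Phi 0)"
    by (rule sol_unique[OF trace_Msys Phi_0 Phi_deriv])
  then show ?thesis by (simp add: Phi_0)
qed

definition X :: "real \<Rightarrow> cmat" where
  "X t = adj2 (Phi t) ** Kdir a ** Phi t"

lemma X_cont: "continuous_on UNIV X"
  unfolding X_def[abs_def]
  by (intro bounded_bilinear.continuous_on[OF bounded_bilinear_mm] continuous_on_const Phi_cont
      bounded_linear.continuous_on[OF bounded_linear_adj2])

lemma trace_X: "trace (X t) = 0"
proof -
  have "trace (X t) = trace ((Phi t ** adj2 (Phi t)) ** Kdir a)"
    unfolding X_def by (metis trace_mul_sym matrix_mul_assoc)
  then show ?thesis by (simp add: Phi_inv trace_cmat)
qed

lemma hconj_X: "hconj (X t) = X t"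
  unfolding X_def by (simp add: hconj_mm hconj_adj2 hconj_Kdir Phi_hconj)

lemma perturbed_sol:
  "picard_sol (M (of_real \<tau> + h)) t = Phi t ** picard_sol (\<lambda>s. mat h ** X s) t"
proof -
  have cXh: "continuous_on UNIV (\<lambda>s. mat h ** X s)"
    by (intro bounded_bilinear.continuous_on[OF bounded_bilinear_mm] continuous_on_const X_cont)
  define U where "U = picard_sol (\<lambda>s. mat h ** X s)"
  have U0: "U 0 = mat 1" and U': "\<And>t. (U has_vector_derivative (mat h ** X t) ** U t) (at t)"
    using picard_sol[OF cXh] unfolding U_def by blast+
  have W': "((\<lambda>t. Phi t ** U t) has_vector_derivative M (of_real \<tau> + h) t ** (Phi t ** U t)) (at t)"
    for t
  proof -
    have "Phi t ** X t = Kdir a ** Phi t"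
      unfolding X_def by (simp add: matrix_mul_assoc Phi_inv)
    moreover have "Phi t ** ((mat h ** X t) ** U t) = mat h ** ((Phi t ** X t) ** U t)"
      by (simp add: cmat_eq_iff algebra_simps)
    ultimately have "Phi t ** ((mat h ** X t) ** U t) = (mat h ** Kdir a) ** (Phi t ** U t)"
      by (simp add: matrix_mul_assoc)
    moreover have "M (of_real \<tau> + h) t = M (of_real \<tau>) t + mat h ** Kdir a"
      by (rule Msys_shift) (use a_pos in simp)
    ultimately have "Phi t ** ((mat h ** X t) ** U t) + (M (of_real \<tau>) t ** Phi t) ** U t
        = M (of_real \<tau> + h) t ** (Phi t ** U t)"
      by (simp add: bounded_bilinear.add_left[OF bounded_bilinear_mm] matrix_mul_assoc add_ac)
    with has_vector_derivative_mm[OF Phi_deriv[of t] U'[of t]] show ?thesis by simp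
  qed
  have "Phi t ** U t = picard_sol (M (of_real \<tau> + h)) t ** (Phi 0 ** U 0)"
    by (rule sol_unique[OF trace_Msys picard_sol[OF continuous_Msys[OF c_cont]] W'])
  then show ?thesis using Phi_0 U0 unfolding U_def by simp
qed

lemma picard_scaled: "picard (\<lambda>s. mat h ** X s) n t = mat (h ^ n) ** picard X n t"
proof (induction n arbitrary: t)
  case (Suc n)
  have cXh: "continuous_on UNIV (\<lambda>s. mat h ** X s)"
    by (intro bounded_bilinear.continuous_on[OF bounded_bilinear_mm] continuous_on_const X_cont)
  define F where "F t = picard (\<lambda>s. mat h ** X s) (Suc n) t - mat (h ^ Suc n) ** picard X (Suc n) t" for t
  have "(F has_vector_derivative
      (mat h ** X s) ** picard (\<lambda>s. mat h ** X s) n s - mat (h ^ Suc n) ** (X s ** picard X n s)) (at s)"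
    for s
    unfolding F_def[abs_def]
    by (intro has_vector_derivative_diff picard_Suc_deriv[OF cXh]
        bounded_linear.has_vector_derivative[OF bounded_bilinear.bounded_linear_right[OF bounded_bilinear_mm]]
        picard_Suc_deriv[OF X_cont])
  moreover have "(mat h ** X s) ** picard (\<lambda>s. mat h ** X s) n s = mat (h ^ Suc n) ** (X s ** picard X n s)"
    for s unfolding Suc.IH by (simp add: cmat_eq_iff algebra_simps)
  ultimately have "(F has_vector_derivative 0) (at s)" for s by simp
  then have "F t = F 0" by (rule zero_derivative_imp_constant)
  then show ?case using picard_Suc_0[OF cXh] picard_Suc_0[OF X_cont] unfolding F_def by simp
qed simp

text \<open>Taylor coefficients of \<open>tr B(\<sigma>, 0)\<close> at \<open>\<sigma> = \<tau>\<close>, when \<open>B(\<tau>, 0) = I\<close>.\<close>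
definition coeff :: "nat \<Rightarrow> complex" where
  "coeff n = trace (picard X n (2 * pi))"

lemma trace_monodromy_series:
  assumes B_id: "Bmon a b \<nu> c (of_real \<tau>) 0 = mat 1"
  shows "trace (Bmon a b \<nu> c \<sigma> 0) = (\<Sum>n. coeff n * (\<sigma> - of_real \<tau>) ^ n)"
    and "summable (\<lambda>n. coeff n * z ^ n)"
proof -
  have cXh: "continuous_on UNIV (\<lambda>s. mat h ** X s)" for h
    by (intro bounded_bilinear.continuous_on[OF bounded_bilinear_mm] continuous_on_const X_cont)
  have trace_term: "trace (picard (\<lambda>s. mat h ** X s) n (2 * pi)) = coeff n * h ^ n" for n h
    unfolding picard_scaled coeff_def by (simp add: trace_cmat algebra_simps)
  have summ: "summable (\<lambda>n. picard (\<lambda>s. mat h ** X s) n (2 * pi))" for h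
    by (rule picard_summable[OF cXh])
  show "summable (\<lambda>n. coeff n * z ^ n)"
    using bounded_linear.summable[OF bounded_linear_trace summ[of z]] unfolding trace_term .
  have "Phi (2 * pi) = mat 1"
    using B_id unfolding Bmon_def Vfund_eq_picard_sol[OF c_cont] Phi_def .
  then have "Bmon a b \<nu> c \<sigma> 0 = picard_sol (\<lambda>s. mat (\<sigma> - of_real \<tau>) ** X s) (2 * pi)"
    using perturbed_sol[of "\<sigma> - of_real \<tau>" "2 * pi"]
    unfolding Bmon_def Vfund_eq_picard_sol[OF c_cont] by simp
  also have "trace \<dots> = (\<Sum>n. trace (picard (\<lambda>s. mat (\<sigma> - of_real \<tau>) ** X s) n (2 * pi)))"
    unfolding picard_sol_def by (rule bounded_linear.suminf[OF bounded_linear_trace summ])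
  finally show "trace (Bmon a b \<nu> c \<sigma> 0) = (\<Sum>n. coeff n * (\<sigma> - of_real \<tau>) ^ n)"
    unfolding trace_term .
qed

lemma coeff_1: "coeff 1 = 0"
  unfolding coeff_def by (rule trace_picard_1[OF X_cont trace_X])

lemma coeff_2: "coeff 2 = - det (picard X 1 (2 * pi))"
  unfolding coeff_def trace_picard_2[OF X_cont] trace_square_cmat
    trace_picard_1[OF X_cont trace_X] by simp

end

subsection \<open>Non-degeneracy of the second coefficient\<close>

text \<open>If \<open>x\<^sup>2 - y\<^sup>2 = 1\<close> with \<open>0 \<le> x, y \<le> N\<close>, then \<open>x - y = 1/(x + y) \<ge> 1/(2N)\<close>.\<close>
lemma diff_sq_lower_bound:
  fixes x y N :: real
  assumes x: "0 \<le> x" and y: "0 \<le> y" and d: "x\<^sup>2 - y\<^sup>2 = 1" and xN: "x \<le> N" and yN: "y \<le> N"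
  shows "1 / (4 * N\<^sup>2) \<le> (x - y)\<^sup>2"
proof -
  have s: "(x - y) * (x + y) = 1" using d by (simp add: power2_eq_square algebra_simps)
  have xp: "x + y > 0" using s x y by (cases "x + y = 0") auto
  have N0: "N > 0" using xp xN yN by linarith
  have "1 / (2 * N) \<le> 1 / (x + y)" using xp xN yN by (intro divide_left_mono) auto
  also have "\<dots> = x - y" using s xp by (simp add: field_simps)
  finally have "(1 / (2 * N))\<^sup>2 \<le> (x - y)\<^sup>2" using N0 by (intro power_mono) auto
  then show ?thesis by (simp add: power2_eq_square field_simps)
qed

context real_parameter
begin

text \<open>Write \<open>\<Phi> = [[p, q], [cnj q, cnj p]]\<close>; then \<open>|p|\<^sup>2 - |q|\<^sup>2 = 1\<close>, and
  \<open>X\<^sub>1\<^sub>1 = i (|p|\<^sup>2 + |q|\<^sup>2) / a\<close>, \<open>|X\<^sub>1\<^sub>2| = 2 |p| |q| / a\<close>.\<close>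
lemma Phi_norms: "(cmod (Phi t $ 1 $ 1))\<^sup>2 - (cmod (Phi t $ 1 $ 2))\<^sup>2 = 1"
  using det_hconj_fixed[OF Phi_hconj, of t] Phi_det[of t] by (metis of_real_eq_1_iff)

lemma X_11: "X t $ 1 $ 1 = \<i> * of_real (((cmod (Phi t $ 1 $ 1))\<^sup>2 + (cmod (Phi t $ 1 $ 2))\<^sup>2) / a)"
proof -
  have "X t $ 1 $ 1 = \<i> / of_real a *
      (Phi t $ 1 $ 1 * cnj (Phi t $ 1 $ 1) + Phi t $ 1 $ 2 * cnj (Phi t $ 1 $ 2))"
    unfolding X_def by (simp add: hconj_fixed[OF Phi_hconj] algebra_simps)
  then show ?thesis by (simp add: complex_norm_square[symmetric] divide_complex_def)
qed

lemma X_12_norm: "cmod (X t $ 1 $ 2) = 2 * cmod (Phi t $ 1 $ 1) * cmod (Phi t $ 1 $ 2) / a"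
proof -
  have "X t $ 1 $ 2 = \<i> / of_real a * (2 * cnj (Phi t $ 1 $ 1) * Phi t $ 1 $ 2)"
    unfolding X_def by (simp add: hconj_fixed[OF Phi_hconj] algebra_simps)
  then show ?thesis using a_pos by (simp add: norm_mult norm_divide)
qed

text \<open>Hence \<open>Im X\<^sub>1\<^sub>1 - |X\<^sub>1\<^sub>2| = (|p| - |q|)\<^sup>2 / a\<close>, which is bounded below on \<open>[0, 2\<pi>]\<close>.\<close>
lemma X_gap:
  obtains \<delta> where "\<delta> > 0" "\<And>s. 0 \<le> s \<Longrightarrow> s \<le> 2 * pi \<Longrightarrow> cmod (X s $ 1 $ 2) \<le> Im (X s $ 1 $ 1) - \<delta>"
proof -
  obtain L where L: "0 \<le> L" "\<And>s. \<bar>s\<bar> \<le> 2 * pi \<Longrightarrow> norm (Phi s) \<le> L"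
    by (rule continuous_bounded_interval[OF Phi_cont, where T="2 * pi"]) blast
  define N where "N = L + 1"
  define \<delta> where "\<delta> = 1 / (4 * N\<^sup>2 * a)"
  have "\<delta> > 0" using L(1) a_pos unfolding \<delta>_def N_def by simp
  moreover have "cmod (X s $ 1 $ 2) \<le> Im (X s $ 1 $ 1) - \<delta>" if s: "0 \<le> s" "s \<le> 2 * pi" for s
  proof -
    define x where "x = cmod (Phi s $ 1 $ 1)"
    define y where "y = cmod (Phi s $ 1 $ 2)"
    have entry_le: "cmod (Phi s $ 1 $ j) \<le> N" for j
      using Finite_Cartesian_Product.norm_nth_le[of "Phi s $ 1" j]
        Finite_Cartesian_Product.norm_nth_le[of "Phi s" 1] L(2)[of s] s
      unfolding N_def by simp
    have "1 / (4 * N\<^sup>2) \<le> (x - y)\<^sup>2"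
      by (rule diff_sq_lower_bound) (use Phi_norms entry_le in \<open>simp_all add: x_def y_def\<close>)
    moreover have "a * \<delta> = 1 / (4 * N\<^sup>2)" unfolding \<delta>_def using a_pos by simp
    ultimately have "2 * x * y + a * \<delta> \<le> x\<^sup>2 + y\<^sup>2" by (simp add: power2_eq_square algebra_simps)
    then have "(2 * x * y + a * \<delta>) / a \<le> (x\<^sup>2 + y\<^sup>2) / a" using a_pos by (intro divide_right_mono) auto
    then show ?thesis unfolding X_12_norm X_11 x_def[symmetric] y_def[symmetric]
      using a_pos by (simp add: add_divide_distrib)
  qed
  ultimately show ?thesis by (rule that)
qed

text \<open>Integrating the gap: the first Picard term \<open>C = \<integral>\<^sub>0\<^sup>2\<^sup>\<pi> X\<close> satisfies \<open>|C\<^sub>1\<^sub>2| < |C\<^sub>1\<^sub>1|\<close>.\<close>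
lemma picard_1_gap: "cmod (picard X 1 (2 * pi) $ 1 $ 2) < cmod (picard X 1 (2 * pi) $ 1 $ 1)"
proof -
  obtain \<delta> where \<delta>: "\<delta> > 0"
    "\<And>s. 0 \<le> s \<Longrightarrow> s \<le> 2 * pi \<Longrightarrow> cmod (X s $ 1 $ 2) \<le> Im (X s $ 1 $ 1) - \<delta>"
    by (rule X_gap) blast
  define p where "p t = picard X 1 t $ 1 $ 1" for t
  define q where "q t = picard X 1 t $ 1 $ 2" for t
  define \<phi> where "\<phi> t = Im (p t) - \<delta> * t" for t
  have Q1': "(picard X 1 has_vector_derivative X s) (at s)" for s
    using picard_Suc_deriv[OF X_cont, of 0] by simp
  have q': "(q has_vector_derivative X s $ 1 $ 2) (at s)" for s
    unfolding q_def[abs_def] by (rule bounded_linear.has_vector_derivative[OF bounded_linear_entry Q1'])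
  have p': "(p has_vector_derivative X s $ 1 $ 1) (at s)" for s
    unfolding p_def[abs_def] by (rule bounded_linear.has_vector_derivative[OF bounded_linear_entry Q1'])
  have \<phi>': "(\<phi> has_vector_derivative Im (X s $ 1 $ 1) - \<delta>) (at s)" for s
    unfolding \<phi>_def[abs_def]
    by (intro has_vector_derivative_diff bounded_linear.has_vector_derivative[OF bounded_linear_Im p'])
       (auto intro!: derivative_eq_intros simp: has_real_derivative_iff_has_vector_derivative[symmetric])
  have "norm (q (2 * pi) - q 0) \<le> \<phi> (2 * pi) - \<phi> 0"
  proof (rule differentiable_bound_general[OF _ _ _ q' \<phi>'])
    show "continuous_on {0..2 * pi} q"
      using has_vector_derivative_imp_continuous_on[OF q'] by (rule continuous_on_subset) simp
    show "continuous_on {0..2 * pi} \<phi>"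
      using has_vector_derivative_imp_continuous_on[OF \<phi>'] by (rule continuous_on_subset) simp
  qed (use \<delta>(2) in auto)
  moreover have "q 0 = 0" "p 0 = 0" using picard_Suc_0[OF X_cont, of 0] unfolding q_def p_def by simp_all
  ultimately have "cmod (q (2 * pi)) \<le> Im (p (2 * pi)) - \<delta> * (2 * pi)" unfolding \<phi>_def by simp
  also have "\<dots> < Im (p (2 * pi))" using \<delta>(1) by simp
  also have "\<dots> \<le> cmod (p (2 * pi))" using abs_Im_le_cmod[of "p (2 * pi)"] by linarith
  finally show ?thesis unfolding p_def q_def .
qed

text \<open>As \<open>C = Q\<^sub>1(2\<pi>)\<close> lies in \<open>su(1,1)\<close>, \<open>det C = |C\<^sub>1\<^sub>1|\<^sup>2 - |C\<^sub>1\<^sub>2|\<^sup>2 > 0\<close>.\<close>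
lemma det_picard_1: "det (picard X 1 (2 * pi)) \<noteq> 0"
proof -
  let ?C = "picard X 1 (2 * pi)"
  have "det ?C = of_real ((cmod (?C $ 1 $ 1))\<^sup>2 - (cmod (?C $ 1 $ 2))\<^sup>2)"
    by (rule det_hconj_fixed[OF hconj_picard_1[OF X_cont hconj_X]])
  moreover have "(cmod (?C $ 1 $ 2))\<^sup>2 < (cmod (?C $ 1 $ 1))\<^sup>2"
    using picard_1_gap by (intro power_strict_mono) auto
  ultimately show ?thesis by (metis of_real_eq_0_iff less_irrefl right_minus_eq)
qed

end

lemma power_series_derivs:
  fixes f :: "complex \<Rightarrow> complex"
  assumes f: "\<And>\<sigma>. f \<sigma> = (\<Sum>n. a n * (\<sigma> - z) ^ n)" and conv: "\<And>w. summable (\<lambda>n. a n * w ^ n)"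
  shows "(f has_field_derivative a 1) (at z)" "deriv (deriv f) z = 2 * a 2"
proof -
  define g1 where "g1 w = (\<Sum>n. diffs a n * w ^ n)" for w
  define g2 where "g2 w = (\<Sum>n. diffs (diffs a) n * w ^ n)" for w
  have conv1: "summable (\<lambda>n. diffs a n * w ^ n)" for w by (rule termdiff_converges_all[OF conv])
  have shift: "((\<lambda>\<sigma>. h (\<sigma> - z)) has_field_derivative h' (\<sigma> - z)) (at \<sigma>)"
    if "\<And>w. (h has_field_derivative h' w) (at w)" for h h' :: "complex \<Rightarrow> complex" and \<sigma>
  proof -
    have "((\<lambda>\<sigma>. h (\<sigma> - z)) has_field_derivative h' (\<sigma> - z) * 1) (at \<sigma>)"
      by (rule DERIV_chain2[OF that]) (auto intro!: derivative_eq_intros)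
    then show ?thesis by simp
  qed
  have f': "(f has_field_derivative g1 (\<sigma> - z)) (at \<sigma>)" for \<sigma>
    unfolding f[abs_def] g1_def
    by (rule shift) (rule termdiffs_strong_converges_everywhere[OF conv])
  have g1': "((\<lambda>\<sigma>. g1 (\<sigma> - z)) has_field_derivative g2 (\<sigma> - z)) (at \<sigma>)" for \<sigma>
    unfolding g1_def g2_def
    by (rule shift) (rule termdiffs_strong_converges_everywhere[OF conv1])
  show "(f has_field_derivative a 1) (at z)"
    using f'[of z] by (simp add: g1_def diffs_def)
  have "deriv f = (\<lambda>\<sigma>. g1 (\<sigma> - z))" by (rule ext) (rule DERIV_imp_deriv[OF f'])
  then have "deriv (deriv f) z = g2 0" using DERIV_imp_deriv[OF g1'[of z]] by simp
  also have "\<dots> = 2 * a 2" by (simp add: g2_def diffs_def numeral_2_eq_2)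
  finally show "deriv (deriv f) z = 2 * a 2" .
qed

theorem proposition2p9:
  fixes a b \<nu> \<tau> :: real and k :: nat and c :: "real \<Rightarrow> complex"
  assumes "a > 0" and "b \<noteq> 0" and "0 \<le> \<nu>" and "\<nu> < 1" and "k \<ge> 2"
    and "Ck_circle k c"
    and "Bmon a b \<nu> c (complex_of_real \<tau>) 0 = mat 1"
  shows "((\<lambda>\<sigma>. trace (Bmon a b \<nu> c \<sigma> 0)) has_field_derivative 0) (at (complex_of_real \<tau>))
    \<and> deriv (deriv (\<lambda>\<sigma>. trace (Bmon a b \<nu> c \<sigma> 0))) (complex_of_real \<tau>) \<noteq> 0"
proof -
  obtain D :: "nat \<Rightarrow> real \<Rightarrow> complex" where "D 0 = c"
    and "\<forall>j<k. \<forall>t. (D j has_vector_derivative D (Suc j) t) (at t)"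
    using assms(6) unfolding Ck_circle_def Ck_fun_def by blast
  then have "(c has_vector_derivative D 1 t) (at t)" for t using assms(5) by auto
  then have "continuous_on UNIV c" by (rule has_vector_derivative_imp_continuous_on)
  then interpret real_parameter a b \<nu> c \<tau> by unfold_locales (use assms(1) in simp)
  note derivs = power_series_derivs[OF trace_monodromy_series[OF assms(7)]]
  show ?thesis
    using derivs coeff_1 coeff_2 det_picard_1 by simp
qed

end
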